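(* Let $\mathcal{P}$ be a finite corpus of programs, let $S$ be the (finite) set of complete abstractions whose size does not exceed the size of the largest program in $\mathcal{P}$, and let $U$ be any real-valued utility function on complete abstractions. Run the naïve top-down search over $S$ augmented with strict dominance pruning, i.e. at any step the search may discard a popped partial abstraction $\hat A'$ instead of expanding it, provided that there exists some partial abstraction $\hat A''$ that strictly dominates $\hat A'$ (whether or not $\hat A''$ has itself been enumerated or pruned). Then the search finds an optimal abstraction, i.e. a complete abstraction $A^\ast\in S$ with $U(A^\ast)\ge U(A)$ for all $A\in S$.
   Context: Programs are closed untyped lambda-calculus terms with de Bruijn indices: $e ::= \lambda.\,e \mid (e\ e) \mid \$i \mid t$, where $\$i$ refers to the variable bound by the $i$-th closest enclosing $\lambda$ and $t$ ranges over a fixed set of primitive symbols. A (complete) abstraction is a term of the grammar $A ::= \lambda.\,A \mid (A\ A) \mid \$i \mid t \mid \alpha$, where $\alpha,\beta,\dots$ are abstraction variables (it represents the body of a function taking the abstraction variables as arguments). A partial abstraction additionally may contain holes $??$: $\hat A ::= A \mid ?? \mid \lambda.\,\hat A \mid (\hat A\ \hat A)$, each hole carrying a unique index. An expansion $\hat A\to\hat A'$ replaces one hole of $\hat A$ by one production of the partial-abstraction grammar ($\lambda.\,??$, $(??\ ??)$ with fresh holes, some $\$i$, some primitive $t$, or an abstraction variable, new or already present). $\hat A\to^\ast A$ ("$A$ is derivable from $\hat A$") denotes the reflexive–transitive closure of expansion; every abstraction is derivable from $??$. The naïve search keeps a queue initialized with the single partial abstraction $??$; at each step it pops a partial abstraction,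 chooses a hole, and expands it in every possible way, pushing resulting partial abstractions onto the queue and, for resulting complete abstractions, computing their utility and updating the best abstraction found so far; it never produces abstractions larger than the largest program in $\mathcal{P}$, so without pruning it enumerates each element of $S$ exactly once. A complete abstraction $A''$ covers a complete abstraction $A'$ if $U(A'')>U(A')$. A partial abstraction $\hat A''$ strictly dominates a partial abstraction $\hat A'$ if for every complete $A'$ with $\hat A'\to^\ast A'$ there exists a complete $A''$ with $\hat A''\to^\ast A''$ such that $A''$ covers $A'$ (abstractions ranging over $S$). *)

theory Defs
  imports Complex_Main
begin

datatype 'p prog = PLam "'p prog" | PApp "'p prog" "'p prog" | PVar nat | PPrim 'p

fun prog_size :: "'p prog \<Rightarrow> nat" where
  "prog_size (PLam e) = Suc (prog_size e)"
| "prog_size (PApp a b) = Suc (prog_size a + prog_size b)"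
| "prog_size (PVar i) = 1"
| "prog_size (PPrim t) = 1"

fun prog_closed_at :: "nat \<Rightarrow> 'p prog \<Rightarrow> bool" where
  "prog_closed_at d (PLam e) = prog_closed_at (Suc d) e"
| "prog_closed_at d (PApp a b) = (prog_closed_at d a \<and> prog_closed_at d b)"
| "prog_closed_at d (PVar i) = (i < d)"
| "prog_closed_at d (PPrim t) = True"

fun prog_prims :: "'p prog \<Rightarrow> 'p set" where
  "prog_prims (PLam e) = prog_prims e"
| "prog_prims (PApp a b) = prog_prims a \<union> prog_prims b"
| "prog_prims (PVar i) = {}"
| "prog_prims (PPrim t) = {t}"

datatype 'p pabs = Lam "'p pabs" | App "'p pabs" "'p pabs" | Var nat | Prim 'p
  | AVar nat
  | Hole      \<comment> \<open>hole ??, identified by its position\<close>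

fun asize :: "'p pabs \<Rightarrow> nat" where
  "asize (Lam e) = Suc (asize e)"
| "asize (App a b) = Suc (asize a + asize b)"
| "asize (Var i) = 1"
| "asize (Prim t) = 1"
| "asize (AVar k) = 1"
| "asize Hole = 1"

fun complete :: "'p pabs \<Rightarrow> bool" where
  "complete (Lam e) = complete e"
| "complete (App a b) = (complete a \<and> complete b)"
| "complete Hole = False"
| "complete _ = True"

fun avars :: "'p pabs \<Rightarrow> nat set" where
  "avars (Lam e) = avars e"
| "avars (App a b) = avars a \<union> avars b"
| "avars (AVar k) = {k}"
| "avars _ = {}"

fun rename :: "(nat \<Rightarrow> nat) \<Rightarrow> 'p pabs \<Rightarrow> 'p pabs" where
  "rename \<sigma> (Lam e) = Lam (rename \<sigma> e)"
| "rename \<sigma> (App a b) = App (rename \<sigma> a) (rename \<sigma> b)"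
| "rename \<sigma> (AVar k) = AVar (\<sigma> k)"
| "rename \<sigma> e = e"

definition fresh :: "'p pabs \<Rightarrow> nat" where
  "fresh A = (LEAST k. k \<notin> avars A)"

inductive hole_pos :: "'p pabs \<Rightarrow> nat list \<Rightarrow> nat \<Rightarrow> bool" where
  "hole_pos Hole [] 0"
| "hole_pos e p d \<Longrightarrow> hole_pos (Lam e) (0 # p) (Suc d)"
| "hole_pos a p d \<Longrightarrow> hole_pos (App a b) (0 # p) d"
| "hole_pos b p d \<Longrightarrow> hole_pos (App a b) (Suc 0 # p) d"

fun subst_at :: "nat list \<Rightarrow> 'p pabs \<Rightarrow> 'p pabs \<Rightarrow> 'p pabs" where
  "subst_at [] r e = r"
| "subst_at (0 # ps) r (Lam e) = Lam (subst_at ps r e)"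
| "subst_at (0 # ps) r (App a b) = App (subst_at ps r a) b"
| "subst_at (Suc 0 # ps) r (App a b) = App a (subst_at ps r b)"
| "subst_at _ r e = e"

definition productions :: "'p set \<Rightarrow> 'p pabs \<Rightarrow> nat \<Rightarrow> 'p pabs set" where
  "productions T A d =
     {Lam Hole, App Hole Hole} \<union> Var ` {..<d} \<union> Prim ` T
     \<union> AVar ` (insert (fresh A) (avars A))"

definition expansions :: "'p set \<Rightarrow> 'p pabs \<Rightarrow> nat list \<Rightarrow> 'p pabs set" where
  "expansions T A p = {subst_at p r A | r d. hole_pos A p d \<and> r \<in> productions T A d}"

definition expand :: "'p set \<Rightarrow> 'p pabs \<Rightarrow> 'p pabs \<Rightarrow> bool" where
  "expand T A A' \<longleftrightarrow> (\<exists>p. A' \<in> expansions T A p)"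

abbreviation derivable :: "'p set \<Rightarrow> 'p pabs \<Rightarrow> 'p pabs \<Rightarrow> bool" where
  "derivable T A A' \<equiv> (expand T)\<^sup>*\<^sup>* A A'"

definition search_space :: "'p set \<Rightarrow> nat \<Rightarrow> 'p pabs set" where
  "search_space T bound = {A. derivable T Hole A \<and> complete A \<and> asize A \<le> bound}"

definition covers :: "('p pabs \<Rightarrow> real) \<Rightarrow> 'p pabs \<Rightarrow> 'p pabs \<Rightarrow> bool" where
  "covers U A'' A' \<longleftrightarrow> U A'' > U A'"

definition strictly_dominates ::
  "'p set \<Rightarrow> nat \<Rightarrow> ('p pabs \<Rightarrow> real) \<Rightarrow> 'p pabs \<Rightarrow> 'p pabs \<Rightarrow> bool" where
  "strictly_dominates T bound U B A \<longleftrightarrow>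
     (\<forall>A' \<in> search_space T bound. derivable T A A' \<longrightarrow>
        (\<exists>A'' \<in> search_space T bound. derivable T B A'' \<and> covers U A'' A'))"

definition is_best :: "('p pabs \<Rightarrow> real) \<Rightarrow> 'p pabs set \<Rightarrow> 'p pabs option \<Rightarrow> bool" where
  "is_best U C b \<longleftrightarrow> (C = {} \<and> b = None) \<or> (\<exists>x. b = Some x \<and> x \<in> C \<and> (\<forall>y\<in>C. U y \<le> U x))"

text \<open>One step of the naive top-down search with strict dominance pruning.
  State: (queue, best abstraction found so far).\<close>
inductive search_step ::
  "'p set \<Rightarrow> nat \<Rightarrow> ('p pabs \<Rightarrow> real) \<Rightarrow>
   'p pabs list \<times> 'p pabs option \<Rightarrow> 'p pabs list \<times> 'p pabs option \<Rightarrow> bool"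
  for T bound U where
  expand_step:
    "\<lbrakk> hole_pos A p d;
       distinct xs;
       set xs = {A' \<in> expansions T A p. \<not> complete A' \<and> asize A' \<le> bound};
       is_best U (set_option b \<union> {A' \<in> expansions T A p. complete A' \<and> asize A' \<le> bound}) b' \<rbrakk>
     \<Longrightarrow> search_step T bound U (A # Q, b) (Q @ xs, b')"
| prune_step:
    "strictly_dominates T bound U B A
     \<Longrightarrow> search_step T bound U (A # Q, b) (Q, b)"

end

theory Submission
  imports Defs "HOL-Combinatorics.Transposition"
begin

(*
  Derivability has a static characterisation: A derives B iff B arises from A by filling its
  holes with well-scoped terms, and the abstraction variables new in B are the least names
  unused in A (an expansion only ever introduces the least unused name, fresh A).
  Consequently, expanding any chosen hole of A loses no completion up to renaming: if the
  completion puts a new variable k at that hole, swapping k with fresh A gives a completion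
  reachable through the expansion by fresh A, and U does not see the renaming.
  Hence the search keeps the invariant that either the best abstraction found so far is
  optimal or some queued partial abstraction derives an optimal one; pruning keeps it too,
  since a strictly dominated partial abstraction derives nothing optimal. The search space is
  finite and nonempty, so an optimum exists, and once the queue is empty the invariant says
  that the best abstraction found is optimal.
*)

lemma rename_id [simp]: "rename id A = A"
  by (induction A) auto

lemma rename_idI: "(\<And>k. k \<in> avars A \<Longrightarrow> \<sigma> k = k) \<Longrightarrow> rename \<sigma> A = A"
  by (induction A) auto

lemma avars_rename [simp]: "avars (rename \<sigma> A) = \<sigma> ` avars A"
  by (induction A) auto

lemma complete_rename [simp]: "complete (rename \<sigma> A) = complete A"
  by (induction A) auto

lemma asize_rename [simp]: "asize (rename \<sigma> A) = asize A"
  by (induction A) auto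

section \<open>Filling holes\<close>

fun wellformed :: "'p set \<Rightarrow> nat \<Rightarrow> 'p pabs \<Rightarrow> bool" where
  "wellformed T d (Lam e) = wellformed T (Suc d) e"
| "wellformed T d (App a b) = (wellformed T d a \<and> wellformed T d b)"
| "wellformed T d (Var i) = (i < d)"
| "wellformed T d (Prim t) = (t \<in> T)"
| "wellformed T d (AVar k) = True"
| "wellformed T d Hole = True"

lemma wellformed_rename [simp]: "wellformed T d (rename \<sigma> A) = wellformed T d A"
  by (induction A arbitrary: d) auto

inductive refines :: "'p set \<Rightarrow> nat \<Rightarrow> 'p pabs \<Rightarrow> 'p pabs \<Rightarrow> bool" for T where
  refines_Hole: "wellformed T d B \<Longrightarrow> refines T d Hole B"
| refines_Lam: "refines T (Suc d) a b \<Longrightarrow> refines T d (Lam a) (Lam b)"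
| refines_App:
    "refines T d a1 b1 \<Longrightarrow> refines T d a2 b2 \<Longrightarrow> refines T d (App a1 a2) (App b1 b2)"
| refines_Var: "refines T d (Var i) (Var i)"
| refines_Prim: "refines T d (Prim t) (Prim t)"
| refines_AVar: "refines T d (AVar k) (AVar k)"

inductive_cases refines_HoleE: "refines T d Hole B"
inductive_cases refines_LamE: "refines T d (Lam a) B"
inductive_cases refines_AppE: "refines T d (App a1 a2) B"

lemma refines_refl: "refines T d A A"
  by (induction A arbitrary: d) (auto intro: refines.intros)

lemma refines_wellformed: "refines T d B C \<Longrightarrow> wellformed T d B \<Longrightarrow> wellformed T d C"
  by (induction rule: refines.induct) auto

lemma refines_trans: "refines T d A B \<Longrightarrow> refines T d B C \<Longrightarrow> refines T d A C"
proof (induction arbitrary: C rule: refines.induct)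
  case (refines_Hole d B)
  then show ?case by (blast intro: refines.refines_Hole refines_wellformed)
qed (auto elim!: refines_LamE refines_AppE intro: refines.intros)

lemma refines_rename: "refines T d A B \<Longrightarrow> refines T d (rename \<sigma> A) (rename \<sigma> B)"
  by (induction rule: refines.induct) (auto intro: refines.intros)

lemma refines_asize_mono: "refines T d A B \<Longrightarrow> asize A \<le> asize B"
proof (induction rule: refines.induct)
  case (refines_Hole d B)
  then show ?case by (cases B) auto
qed auto

fun nonhole_size :: "'p pabs \<Rightarrow> nat" where
  "nonhole_size Hole = 0"
| "nonhole_size (Lam e) = Suc (nonhole_size e)"
| "nonhole_size (App a b) = Suc (nonhole_size a + nonhole_size b)"
| "nonhole_size _ = 1"

lemma refines_nonhole_size_mono: "refines T d A B \<Longrightarrow> nonhole_size A \<le> nonhole_size B"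
  by (induction rule: refines.induct) auto

lemma hole_pos_not_complete: "hole_pos A p d \<Longrightarrow> \<not> complete A"
  by (induction rule: hole_pos.induct) auto

lemma avars_subst_at: "hole_pos A p d \<Longrightarrow> avars (subst_at p r A) = avars A \<union> avars r"
  by (induction rule: hole_pos.induct) auto

lemma nonhole_size_subst_at:
  "hole_pos A p d \<Longrightarrow> nonhole_size (subst_at p r A) = nonhole_size A + nonhole_size r"
  by (induction rule: hole_pos.induct) auto

lemma refines_subst_at:
  "hole_pos A p d \<Longrightarrow> wellformed T (c + d) r \<Longrightarrow> refines T c A (subst_at p r A)"
  by (induction arbitrary: c rule: hole_pos.induct) (auto intro!: refines.intros refines_refl)

fun subterm_at :: "nat list \<Rightarrow> 'p pabs \<Rightarrow> 'p pabs" where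
  "subterm_at [] e = e"
| "subterm_at (0 # ps) (Lam e) = subterm_at ps e"
| "subterm_at (0 # ps) (App a b) = subterm_at ps a"
| "subterm_at (Suc 0 # ps) (App a b) = subterm_at ps b"
| "subterm_at _ e = e"

lemma avars_subterm_at: "avars (subterm_at p B) \<subseteq> avars B"
  by (induction p B rule: subterm_at.induct) auto

lemma complete_subterm_at: "complete B \<Longrightarrow> complete (subterm_at p B)"
  by (induction p B rule: subterm_at.induct) auto

lemma subterm_at_rename: "subterm_at p (rename \<sigma> B) = rename \<sigma> (subterm_at p B)"
  by (induction p B rule: subterm_at.induct) auto

lemma refines_wellformed_subterm_at:
  "hole_pos A p d \<Longrightarrow> refines T c A B \<Longrightarrow> wellformed T (c + d) (subterm_at p B)"
  by (induction arbitrary: c B rule: hole_pos.induct)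
    (fastforce elim!: refines_HoleE refines_LamE refines_AppE)+

lemma refines_subst_at_subterm_at:
  "hole_pos A p d \<Longrightarrow> refines T c A B \<Longrightarrow> refines T (c + d) r (subterm_at p B)
    \<Longrightarrow> refines T c (subst_at p r A) B"
  by (induction arbitrary: c B rule: hole_pos.induct)
    (auto elim!: refines_HoleE refines_LamE refines_AppE intro!: refines.intros)

lemma refines_neq_hole:
  "refines T c A B \<Longrightarrow> A \<noteq> B \<Longrightarrow> \<exists>p d. hole_pos A p d \<and> subterm_at p B \<noteq> Hole"
proof (induction rule: refines.induct)
  case (refines_Hole d B)
  then show ?case using hole_pos.intros(1) by force
next
  case (refines_Lam d a b)
  then obtain p d' where "hole_pos a p d'" "subterm_at p b \<noteq> Hole" by auto
  then show ?case using hole_pos.intros(2) by force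
next
  case (refines_App d a1 b1 a2 b2)
  show ?case
  proof (cases "a1 = b1")
    case True
    with refines_App obtain p d' where "hole_pos a2 p d'" "subterm_at p b2 \<noteq> Hole" by auto
    then show ?thesis using hole_pos.intros(4) by force
  next
    case False
    with refines_App obtain p d' where "hole_pos a1 p d'" "subterm_at p b1 \<noteq> Hole" by auto
    then show ?thesis using hole_pos.intros(3) by force
  qed
qed auto

lemma refines_new_avar:
  "refines T c A B \<Longrightarrow> k \<in> avars B \<Longrightarrow> k \<notin> avars A
    \<Longrightarrow> \<exists>p d. hole_pos A p d \<and> k \<in> avars (subterm_at p B)"
proof (induction rule: refines.induct)
  case (refines_Hole d B)
  then show ?case using hole_pos.intros(1) by force
next
  case (refines_Lam d a b)
  then obtain p d' where "hole_pos a p d'" "k \<in> avars (subterm_at p b)" by auto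
  then show ?case using hole_pos.intros(2) by force
next
  case (refines_App d a1 b1 a2 b2)
  show ?case
  proof (cases "k \<in> avars b1")
    case True
    with refines_App obtain p d' where "hole_pos a1 p d'" "k \<in> avars (subterm_at p b1)" by auto
    then show ?thesis using hole_pos.intros(3) by force
  next
    case False
    with refines_App obtain p d' where "hole_pos a2 p d'" "k \<in> avars (subterm_at p b2)" by auto
    then show ?thesis using hole_pos.intros(4) by force
  qed
qed auto

section \<open>Derivability\<close>

definition initial_extension :: "nat set \<Rightarrow> nat set \<Rightarrow> bool" where
  "initial_extension X Y \<longleftrightarrow> X \<subseteq> Y \<and> (\<forall>k\<in>Y - X. \<forall>j<k. j \<notin> X \<longrightarrow> j \<in> Y)"

lemma initial_extension_refl: "initial_extension X X"
  unfolding initial_extension_def by auto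

lemma initial_extension_trans:
  "initial_extension X Y \<Longrightarrow> initial_extension Y Z \<Longrightarrow> initial_extension X Z"
  unfolding initial_extension_def by blast

lemma finite_avars: "finite (avars A)"
  by (induction A) auto

lemma fresh_notin_avars: "fresh A \<notin> avars A"
proof -
  obtain k where "k \<notin> avars A"
    using finite_avars ex_new_if_finite infinite_UNIV_nat by blast
  then show ?thesis unfolding fresh_def by (rule LeastI)
qed

lemma less_fresh_in_avars: "j < fresh A \<Longrightarrow> j \<in> avars A"
  unfolding fresh_def using not_less_Least by blast

lemma initial_extension_insert_fresh:
  "initial_extension (avars A) Y \<Longrightarrow> fresh A \<in> Y
    \<Longrightarrow> initial_extension (insert (fresh A) (avars A)) Y"
  unfolding initial_extension_def by auto

lemma initial_extension_subset_insert_fresh: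
  "avars A \<subseteq> Y \<Longrightarrow> Y \<subseteq> insert (fresh A) (avars A) \<Longrightarrow> initial_extension (avars A) Y"
  unfolding initial_extension_def using less_fresh_in_avars by blast

lemma fresh_in_initial_extension:
  assumes "initial_extension (avars A) Y" "k \<in> Y" "k \<notin> avars A"
  shows "fresh A \<in> Y"
proof -
  have "fresh A \<le> k"
    unfolding fresh_def using \<open>k \<notin> avars A\<close> by (rule Least_le)
  then show ?thesis
    using assms fresh_notin_avars[of A] unfolding initial_extension_def
    by (cases "fresh A = k") auto
qed

lemma wellformed_productions: "r \<in> productions T A d \<Longrightarrow> wellformed T d r"
  unfolding productions_def by auto

lemma avars_productions: "r \<in> productions T A d \<Longrightarrow> avars r \<subseteq> insert (fresh A) (avars A)"
  unfolding productions_def by auto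

lemma expandI: "hole_pos A p d \<Longrightarrow> r \<in> productions T A d \<Longrightarrow> expand T A (subst_at p r A)"
  unfolding expand_def expansions_def by blast

lemma expandE:
  assumes "expand T A B"
  obtains p d r where "hole_pos A p d" "r \<in> productions T A d" "B = subst_at p r A"
  using assms unfolding expand_def expansions_def by blast

lemma derivable_refines:
  assumes "derivable T A B"
  shows "refines T 0 A B \<and> initial_extension (avars A) (avars B)"
  using assms
proof (induction rule: rtranclp_induct)
  case base
  show ?case using refines_refl initial_extension_refl by blast
next
  case (step B C)
  from step(2) obtain p d r where
    hpr: "hole_pos B p d" "r \<in> productions T B d" and C: "C = subst_at p r B"
    by (rule expandE)
  have "refines T 0 B C"
    unfolding C using refines_subst_at[OF hpr(1), of T 0] wellformed_productions[OF hpr(2)] by simp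
  moreover have "initial_extension (avars B) (avars C)"
    unfolding C avars_subst_at[OF hpr(1)] using avars_productions[OF hpr(2)]
    by (intro initial_extension_subset_insert_fresh) auto
  ultimately show ?case using step(3) refines_trans initial_extension_trans by blast
qed

fun head_production :: "'p pabs \<Rightarrow> 'p pabs" where
  "head_production (Lam e) = Lam Hole"
| "head_production (App a b) = App Hole Hole"
| "head_production e = e"

lemma refines_head_production: "wellformed T d s \<Longrightarrow> refines T d (head_production s) s"
  by (cases s) (auto intro!: refines.intros)

lemma nonhole_size_head_production: "s \<noteq> Hole \<Longrightarrow> nonhole_size (head_production s) = 1"
  by (cases s) auto

lemma avars_head_production: "avars (head_production s) \<subseteq> avars s"
  by (cases s) auto

lemma head_production_in_productions:
  "wellformed T d s \<Longrightarrow> s \<noteq> Hole \<Longrightarrow> avars (head_production s) \<subseteq> insert (fresh A) (avars A)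
    \<Longrightarrow> head_production s \<in> productions T A d"
  by (cases s) (auto simp: productions_def)

lemma refines_expand_head_production:
  assumes ref: "refines T 0 A B" and ext: "initial_extension (avars A) (avars B)"
    and hp: "hole_pos A p d" and s: "subterm_at p B \<noteq> Hole"
    and new: "avars (head_production (subterm_at p B)) \<subseteq> insert (fresh A) (avars A)"
  defines "A' \<equiv> subst_at p (head_production (subterm_at p B)) A"
  shows "head_production (subterm_at p B) \<in> productions T A d"
    and "refines T 0 A' B" and "initial_extension (avars A') (avars B)"
    and "nonhole_size A' = Suc (nonhole_size A)"
proof -
  let ?s = "subterm_at p B"
  have wf: "wellformed T d ?s" using refines_wellformed_subterm_at[OF hp ref] by simp
  show "head_production ?s \<in> productions T A d"
    using head_production_in_productions[OF wf s new] .
  show "refines T 0 A' B"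
    unfolding A'_def using refines_subst_at_subterm_at[OF hp ref] refines_head_production[OF wf]
    by simp
  show "nonhole_size A' = Suc (nonhole_size A)"
    unfolding A'_def by (simp add: nonhole_size_subst_at[OF hp] nonhole_size_head_production[OF s])
  show "initial_extension (avars A') (avars B)"
  proof (cases "fresh A \<in> avars (head_production ?s)")
    case True
    then have "avars A \<union> avars (head_production ?s) = insert (fresh A) (avars A)"
      using new by blast
    moreover have "fresh A \<in> avars B"
      using True avars_head_production avars_subterm_at by blast
    ultimately show ?thesis
      unfolding A'_def avars_subst_at[OF hp] using initial_extension_insert_fresh[OF ext] by simp
  next
    case False
    then show ?thesis
      unfolding A'_def avars_subst_at[OF hp] using new ext by (simp add: Un_absorb2 subset_insert)
  qed
qed

lemma refines_expandable_hole:
  assumes ref: "refines T 0 A B" and ext: "initial_extension (avars A) (avars B)" and "A \<noteq> B"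
  obtains p d where "hole_pos A p d" "subterm_at p B \<noteq> Hole"
    "avars (head_production (subterm_at p B)) \<subseteq> insert (fresh A) (avars A)"
proof (cases "fresh A \<in> avars B")
  case True
  then obtain p d where "hole_pos A p d" and f: "fresh A \<in> avars (subterm_at p B)"
    using refines_new_avar[OF ref] fresh_notin_avars by blast
  moreover from f have "subterm_at p B \<noteq> Hole"
    and "avars (head_production (subterm_at p B)) \<subseteq> insert (fresh A) (avars A)"
    by (cases "subterm_at p B"; auto)+
  ultimately show ?thesis using that by blast
next
  case False
  then have "avars B = avars A"
    using ext fresh_in_initial_extension unfolding initial_extension_def by blast
  moreover obtain p d where "hole_pos A p d" "subterm_at p B \<noteq> Hole"
    using refines_neq_hole[OF ref \<open>A \<noteq> B\<close>] by blast
  ultimately show ?thesis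
    using that avars_head_production avars_subterm_at by blast
qed

lemma refines_derivable:
  "refines T 0 A B \<Longrightarrow> initial_extension (avars A) (avars B) \<Longrightarrow> derivable T A B"
proof (induction "nonhole_size B - nonhole_size A" arbitrary: A rule: less_induct)
  case less
  show ?case
  proof (cases "A = B")
    case False
    with less.prems obtain p d where hp: "hole_pos A p d" and s: "subterm_at p B \<noteq> Hole"
      and new: "avars (head_production (subterm_at p B)) \<subseteq> insert (fresh A) (avars A)"
      by (rule refines_expandable_hole)
    note A' = refines_expand_head_production[OF less.prems hp s new]
    have "nonhole_size A < nonhole_size B"
      using A'(4) refines_nonhole_size_mono[OF A'(2)] by simp
    then have "derivable T (subst_at p (head_production (subterm_at p B)) A) B"
      using less.hyps A'(2,3,4) by simp
    with expandI[OF hp A'(1)] show ?thesis by (rule converse_rtranclp_into_rtranclp)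
  qed simp
qed

theorem derivable_iff_refines:
  "derivable T A B \<longleftrightarrow> refines T 0 A B \<and> initial_extension (avars A) (avars B)"
  using derivable_refines refines_derivable by blast

lemma derivable_through_expansion:
  assumes der: "derivable T A Z" and cZ: "complete Z" and hp: "hole_pos A p d"
  obtains r \<sigma> where "r \<in> productions T A d" "bij \<sigma>"
    "derivable T (subst_at p r A) (rename \<sigma> Z)"
proof -
  have via_head: "\<exists>r\<in>productions T A d. derivable T (subst_at p r A) B"
    if "derivable T A B" "complete B"
      "avars (head_production (subterm_at p B)) \<subseteq> insert (fresh A) (avars A)" for B
  proof -
    from that(1) have ref: "refines T 0 A B" and ext: "initial_extension (avars A) (avars B)"
      by (simp_all add: derivable_iff_refines)
    have s: "subterm_at p B \<noteq> Hole" using complete_subterm_at[OF that(2), of p] by auto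
    note A' = refines_expand_head_production[OF ref ext hp s that(3)]
    show ?thesis using A'(1) refines_derivable[OF A'(2,3)] by blast
  qed
  show ?thesis
  proof (cases "avars (head_production (subterm_at p Z)) \<subseteq> insert (fresh A) (avars A)")
    case True
    with via_head[OF der cZ] show ?thesis using that[of _ id] by auto
  next
    case False
    then obtain k where sk: "subterm_at p Z = AVar k" and kA: "k \<notin> avars A"
      by (cases "subterm_at p Z") auto
    define \<sigma> where "\<sigma> = transpose k (fresh A)"
    from der have ref: "refines T 0 A Z" and ext: "initial_extension (avars A) (avars Z)"
      by (simp_all add: derivable_iff_refines)
    have kZ: "k \<in> avars Z" using avars_subterm_at[of p Z] sk by simp
    have fZ: "fresh A \<in> avars Z" using fresh_in_initial_extension[OF ext kZ kA] .
    have "rename \<sigma> A = A"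
      using kA fresh_notin_avars[of A] by (intro rename_idI) (auto simp: \<sigma>_def transpose_def)
    moreover have "avars (rename \<sigma> Z) = avars Z" using kZ fZ by (simp add: \<sigma>_def)
    ultimately have "derivable T A (rename \<sigma> Z)"
      using refines_rename[OF ref, of \<sigma>] ext by (simp add: derivable_iff_refines)
    moreover have "subterm_at p (rename \<sigma> Z) = AVar (fresh A)"
      by (simp add: subterm_at_rename sk \<sigma>_def)
    ultimately obtain r where "r \<in> productions T A d" "derivable T (subst_at p r A) (rename \<sigma> Z)"
      using via_head[of "rename \<sigma> Z"] cZ by auto
    with that[of r \<sigma>] show ?thesis by (simp add: \<sigma>_def)
  qed
qed

section \<open>Finiteness of the search space\<close>

fun atoms_bounded :: "'p set \<Rightarrow> nat \<Rightarrow> 'p pabs \<Rightarrow> bool" where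
  "atoms_bounded T m (Lam e) = atoms_bounded T m e"
| "atoms_bounded T m (App a b) = (atoms_bounded T m a \<and> atoms_bounded T m b)"
| "atoms_bounded T m (Var i) = (i < m)"
| "atoms_bounded T m (Prim t) = (t \<in> T)"
| "atoms_bounded T m (AVar k) = (k < m)"
| "atoms_bounded T m Hole = True"

lemma asize_neq_0 [simp]: "asize A \<noteq> 0"
  by (cases A) auto

lemma finite_atoms_bounded: "finite T \<Longrightarrow> finite {A. asize A \<le> n \<and> atoms_bounded T m A}"
proof (induction n)
  case 0
  then show ?case by simp
next
  case (Suc n)
  let ?G = "{A. asize A \<le> n \<and> atoms_bounded T m A}"
  let ?H = "{Hole} \<union> Var ` {..<m} \<union> AVar ` {..<m} \<union> Prim ` T \<union> Lam ` ?G
      \<union> case_prod App ` (?G \<times> ?G)"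
  have "{A. asize A \<le> Suc n \<and> atoms_bounded T m A} \<subseteq> ?H"
  proof
    fix A assume "A \<in> {A. asize A \<le> Suc n \<and> atoms_bounded T m A}"
    then show "A \<in> ?H" by (cases A) auto
  qed
  moreover have "finite ?H" using Suc by auto
  ultimately show ?case by (rule finite_subset)
qed

lemma wellformed_atoms_bounded:
  "wellformed T d A \<Longrightarrow> avars A \<subseteq> {..<m} \<Longrightarrow> d + asize A \<le> m \<Longrightarrow> atoms_bounded T m A"
  by (induction A arbitrary: d) auto

lemma card_avars_le_asize: "card (avars A) \<le> asize A"
proof (induction A)
  case (App a b)
  then show ?case using card_Un_le[of "avars a" "avars b"] by auto
qed auto

lemma initial_extension_empty_less_card:
  assumes "initial_extension {} Y" "finite Y" "k \<in> Y"
  shows "k < card Y"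
proof -
  have "{..k} \<subseteq> Y" using assms(1,3) unfolding initial_extension_def by (auto simp: le_less)
  then have "card {..k} \<le> card Y" by (rule card_mono[OF assms(2)])
  then show ?thesis by simp
qed

lemma search_space_atoms_bounded:
  "search_space T bound \<subseteq> {A. asize A \<le> bound \<and> atoms_bounded T bound A}"
proof
  fix A assume "A \<in> search_space T bound"
  then have "derivable T Hole A" and size: "asize A \<le> bound" unfolding search_space_def by auto
  then have "refines T 0 Hole A" and ext: "initial_extension {} (avars A)"
    by (simp_all add: derivable_iff_refines)
  then have "wellformed T 0 A" by (auto elim: refines_HoleE)
  moreover have "avars A \<subseteq> {..<bound}"
    using initial_extension_empty_less_card[OF ext finite_avars] card_avars_le_asize[of A] size
    by fastforce
  ultimately show "A \<in> {A. asize A \<le> bound \<and> atoms_bounded T bound A}"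
    using wellformed_atoms_bounded[of T 0 A bound] size by simp
qed

lemma finite_search_space: "finite T \<Longrightarrow> finite (search_space T bound)"
  using finite_subset[OF search_space_atoms_bounded finite_atoms_bounded] .

lemma AVar_in_search_space:
  assumes "1 \<le> bound"
  shows "AVar 0 \<in> search_space T bound"
proof -
  have "AVar 0 \<in> productions T Hole 0" unfolding productions_def fresh_def by simp
  from expandI[OF hole_pos.intros(1) this] have "expand T Hole (AVar 0)" by simp
  then show ?thesis unfolding search_space_def using assms by auto
qed

section \<open>Correctness of the search\<close>

definition optimal :: "'p set \<Rightarrow> nat \<Rightarrow> ('p pabs \<Rightarrow> real) \<Rightarrow> 'p pabs \<Rightarrow> bool" where
  "optimal T bound U x \<longleftrightarrow>
     x \<in> search_space T bound \<and> (\<forall>y\<in>search_space T bound. U y \<le> U x)"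

abbreviation renaming_invariant :: "'p set \<Rightarrow> nat \<Rightarrow> ('p pabs \<Rightarrow> real) \<Rightarrow> bool" where
  "renaming_invariant T bound U \<equiv> \<forall>\<sigma> A. bij \<sigma> \<longrightarrow> A \<in> search_space T bound
     \<longrightarrow> rename \<sigma> A \<in> search_space T bound \<longrightarrow> U (rename \<sigma> A) = U A"

lemma optimal_exists:
  assumes "finite T" "1 \<le> bound"
  shows "\<exists>x. optimal T bound U x"
proof -
  let ?S = "search_space T bound"
  have fin: "finite (U ` ?S)" using finite_search_space[OF assms(1)] by simp
  have ne: "U ` ?S \<noteq> {}" using AVar_in_search_space[OF assms(2)] by blast
  obtain x where x: "x \<in> ?S" "U x = Max (U ` ?S)" using Max_in[OF fin ne] by auto
  have "U y \<le> U x" if "y \<in> ?S" for y using Max_ge[OF fin] that x(2) by simp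
  then show ?thesis unfolding optimal_def using x(1) by blast
qed

lemma complete_derivable_eq: "derivable T A B \<Longrightarrow> complete A \<Longrightarrow> B = A"
  by (induction rule: converse_rtranclp_induct) (auto elim: expandE dest: hole_pos_not_complete)

lemma dominated_not_optimal:
  "strictly_dominates T bound U B A \<Longrightarrow> derivable T A Z \<Longrightarrow> \<not> optimal T bound U Z"
  unfolding strictly_dominates_def covers_def optimal_def by force

lemma optimal_through_expansion:
  assumes inv: "renaming_invariant T bound U" and A: "derivable T Hole A"
    and Z: "derivable T A Z" "optimal T bound U Z" and hp: "hole_pos A p d"
  obtains A' Z' where "A' \<in> expansions T A p" "asize A' \<le> bound"
    "derivable T A' Z'" "optimal T bound U Z'"
proof -
  have ZS: "Z \<in> search_space T bound" using Z(2) unfolding optimal_def by blast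
  then have cZ: "complete Z" and sZ: "asize Z \<le> bound" unfolding search_space_def by auto
  obtain r \<sigma> where r: "r \<in> productions T A d" "bij \<sigma>"
    and Z': "derivable T (subst_at p r A) (rename \<sigma> Z)"
    using derivable_through_expansion[OF Z(1) cZ hp] .
  have A': "subst_at p r A \<in> expansions T A p" unfolding expansions_def using hp r(1) by blast
  have "derivable T Hole (rename \<sigma> Z)"
    using A expandI[OF hp r(1)] Z' by (meson rtranclp.rtrancl_into_rtrancl rtranclp_trans)
  then have Z'S: "rename \<sigma> Z \<in> search_space T bound"
    using cZ sZ unfolding search_space_def by simp
  with inv r(2) ZS Z(2) have "optimal T bound U (rename \<sigma> Z)"
    unfolding optimal_def by simp
  moreover have "asize (subst_at p r A) \<le> bound"
    using refines_asize_mono derivable_refines[OF Z'] sZ by fastforce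
  ultimately show ?thesis using that A' Z' by blast
qed

lemma is_best_subset: "is_best U C b \<Longrightarrow> set_option b \<subseteq> C"
  unfolding is_best_def by auto

lemma is_best_optimal:
  assumes "is_best U C b" "C \<subseteq> search_space T bound" "y \<in> C" "optimal T bound U y"
  shows "\<exists>x\<in>set_option b. optimal T bound U x"
  using assms unfolding is_best_def optimal_def by fastforce

lemma derivable_expansions:
  "derivable T Hole A \<Longrightarrow> A' \<in> expansions T A p \<Longrightarrow> derivable T Hole A'"
  unfolding expand_def by (blast intro: rtranclp.rtrancl_into_rtrancl)

lemma expand_step_keeps_optimal:
  assumes inv: "renaming_invariant T bound U" and A: "derivable T Hole A"
    and Z: "derivable T A Z" "optimal T bound U Z" and hp: "hole_pos A p d"
    and xs: "set xs = {A' \<in> expansions T A p. \<not> complete A' \<and> asize A' \<le> bound}"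
    and best: "is_best U (set_option b \<union> {A' \<in> expansions T A p. complete A' \<and> asize A' \<le> bound}) b'"
    and bS: "set_option b \<subseteq> search_space T bound"
  shows "(\<exists>x\<in>set_option b'. optimal T bound U x)
    \<or> (\<exists>A'\<in>set xs. \<exists>Z. derivable T A' Z \<and> optimal T bound U Z)"
proof -
  obtain A' Z' where A': "A' \<in> expansions T A p" "asize A' \<le> bound"
    and Z': "derivable T A' Z'" "optimal T bound U Z'"
    using optimal_through_expansion[OF inv A Z hp] .
  show ?thesis
  proof (cases "complete A'")
    case True
    have "set_option b \<union> {A' \<in> expansions T A p. complete A' \<and> asize A' \<le> bound}
        \<subseteq> search_space T bound"
      using bS derivable_expansions[OF A] unfolding search_space_def by auto
    moreover have "optimal T bound U A'" using Z' complete_derivable_eq[OF Z'(1) True] by simp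
    ultimately show ?thesis using is_best_optimal[OF best] A' True by blast
  next
    case False
    then show ?thesis using A' Z' xs by auto
  qed
qed

fun search_invariant ::
  "'p set \<Rightarrow> nat \<Rightarrow> ('p pabs \<Rightarrow> real) \<Rightarrow> 'p pabs list \<times> 'p pabs option \<Rightarrow> bool" where
  "search_invariant T bound U (Q, b) \<longleftrightarrow>
     (\<forall>A\<in>set Q. derivable T Hole A) \<and> set_option b \<subseteq> search_space T bound \<and>
     ((\<exists>x\<in>set_option b. optimal T bound U x)
      \<or> (\<exists>A\<in>set Q. \<exists>Z. derivable T A Z \<and> optimal T bound U Z))"

lemma search_step_invariant:
  assumes step: "search_step T bound U s s'" and s: "search_invariant T bound U s"
    and inv: "renaming_invariant T bound U"
  shows "search_invariant T bound U s'"
  using step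
proof cases
  case (expand_step A p d xs b b' Q)
  let ?C = "set_option b \<union> {A' \<in> expansions T A p. complete A' \<and> asize A' \<le> bound}"
  from s expand_step(1) have dA: "derivable T Hole A" and dQ: "\<forall>A\<in>set Q. derivable T Hole A"
    and bS: "set_option b \<subseteq> search_space T bound"
    and opt: "(\<exists>x\<in>set_option b. optimal T bound U x)
      \<or> (\<exists>A'\<in>set (A # Q). \<exists>Z. derivable T A' Z \<and> optimal T bound U Z)"
    by auto
  have CS: "?C \<subseteq> search_space T bound"
    using bS derivable_expansions[OF dA] unfolding search_space_def by auto
  have "(\<exists>x\<in>set_option b'. optimal T bound U x)
    \<or> (\<exists>A'\<in>set (Q @ xs). \<exists>Z. derivable T A' Z \<and> optimal T bound U Z)"
    using opt is_best_optimal[OF expand_step(6) CS]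
      expand_step_keeps_optimal[OF inv dA _ _ expand_step(3,5,6) bS] by fastforce
  then show ?thesis
    using expand_step dQ derivable_expansions[OF dA] CS is_best_subset[OF expand_step(6)] by auto
next
  case (prune_step B A Q b)
  then show ?thesis using s dominated_not_optimal by fastforce
qed

theorem lemma3p1:
  fixes T :: "'p set" and P :: "'p prog set" and U :: "'p pabs \<Rightarrow> real"
    and bound :: nat and best :: "'p pabs option"
  assumes "finite T"
    and "finite P" and "P \<noteq> {}"
    and "\<forall>e \<in> P. prog_closed_at 0 e \<and> prog_prims e \<subseteq> T"
    and "bound = Max (prog_size ` P)"
    and "\<forall>\<sigma> A. bij \<sigma> \<longrightarrow> A \<in> search_space T bound \<longrightarrow> rename \<sigma> A \<in> search_space T bound
            \<longrightarrow> U (rename \<sigma> A) = U A"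
    and "(search_step T bound U)\<^sup>*\<^sup>* ([Hole], None) ([], best)"
  shows "\<exists>Astar. best = Some Astar \<and> Astar \<in> search_space T bound
           \<and> (\<forall>A \<in> search_space T bound. U Astar \<ge> U A)"
proof -
  obtain e where e: "e \<in> P" using assms(3) by blast
  have "1 \<le> prog_size e" by (cases e) auto
  also have "prog_size e \<le> bound" using assms(2,5) e by simp
  finally obtain Z where Z: "optimal T bound U Z" using optimal_exists assms(1) by blast
  moreover from Z have "derivable T Hole Z" unfolding optimal_def search_space_def by blast
  ultimately have "search_invariant T bound U ([Hole], None)" by auto
  with assms(7) have "search_invariant T bound U ([], best)"
    by (induction rule: rtranclp_induct) (blast intro: search_step_invariant[OF _ _ assms(6)])+
  then show ?thesis by (auto simp: optimal_def)
qed

end
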